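(* Fix $\alpha>0$, $\gamma\in(0,1)$, a constant $\bar\rho_i>0$, a finite nonempty multiset $D_{\rho_i}$ of samples $x=(s,a_i,\mathbf{a}_{-i},s')$ with $s,s'\in S$, and a distribution $p_0$ on $S$. For $\nu_i:S\to\mathbb{R}$ let $$\hat e_{\nu_i}(x)=r(s,a_i,\mathbf{a}_{-i})-\alpha\log\frac{\boldsymbol{\pi}_{-i}(\mathbf{a}_{-i}\mid s)}{\boldsymbol{\pi}^D_{-i}(\mathbf{a}_{-i}\mid s,a_i)}+\gamma\nu_i(s')-\nu_i(s),$$ $$L(\nu_i):=\bar\rho_i\,\alpha\,\hat{\mathbf{E}}_{x\in D_{\rho_i}}\Big[\exp\Big(\tfrac1\alpha\hat e_{\nu_i}(x)-1\Big)\Big]+(1-\gamma)\mathbb{E}_{s_0\sim p_0}[\nu_i(s_0)],$$ $$\tilde{\mathcal{L}}(\nu_i):=\alpha\log\Big(\bar\rho_i\,\hat{\mathbf{E}}_{x\in D_{\rho_i}}\Big[\exp\Big(\tfrac1\alpha\hat e_{\nu_i}(x)\Big)\Big]\Big)+(1-\gamma)\mathbb{E}_{s_0\sim p_0}[\nu_i(s_0)].$$ Then for any minimizer $\tilde\nu_i^*$ of $\tilde{\mathcal{L}}$ (over all functions $S\to\mathbb{R}$), there is a constant $C\in\mathbb{R}$ such that $\tilde\nu_i^*+C$ is a minimizer of $L$.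
   Context: $\hat{\mathbf{E}}_{x\in D}[f(x)]:=\frac{1}{|D|}\sum_{x\in D}f(x)$ is the empirical average over a finite multiset $D$. $r$ is a real-valued reward; $\boldsymbol{\pi}_{-i}(\mathbf{a}_{-i}\mid s)$ and $\boldsymbol{\pi}^D_{-i}(\mathbf{a}_{-i}\mid s,a_i)$ are fixed conditional probability distributions, positive on the samples of $D_{\rho_i}$. *)

theory Defs
  imports "HOL-Probability.Probability"
begin

definition emp_avg :: "'x multiset \<Rightarrow> ('x \<Rightarrow> real) \<Rightarrow> real" where
  "emp_avg D f = (\<Sum>x\<in>#D. f x) / real (size D)"

definition e_hat ::
  "real \<Rightarrow> real \<Rightarrow> ('s \<Rightarrow> 'a \<Rightarrow> 'b \<Rightarrow> real) \<Rightarrow> ('s \<Rightarrow> 'b \<Rightarrow> real)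
   \<Rightarrow> ('s \<Rightarrow> 'a \<Rightarrow> 'b \<Rightarrow> real) \<Rightarrow> ('s \<Rightarrow> real) \<Rightarrow> 's \<times> 'a \<times> 'b \<times> 's \<Rightarrow> real" where
  "e_hat \<alpha> \<gamma> r pimi piD \<nu> x = (case x of (s, ai, ami, s') \<Rightarrow>
      r s ai ami - \<alpha> * ln (pimi s ami / piD s ai ami) + \<gamma> * \<nu> s' - \<nu> s)"

definition L_obj ::
  "real \<Rightarrow> real \<Rightarrow> real \<Rightarrow> ('s \<times> 'a \<times> 'b \<times> 's) multiset \<Rightarrow> 's pmf
   \<Rightarrow> ('s \<Rightarrow> 'a \<Rightarrow> 'b \<Rightarrow> real) \<Rightarrow> ('s \<Rightarrow> 'b \<Rightarrow> real)
   \<Rightarrow> ('s \<Rightarrow> 'a \<Rightarrow> 'b \<Rightarrow> real) \<Rightarrow> ('s \<Rightarrow> real) \<Rightarrow> real" where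
  "L_obj \<alpha> \<gamma> \<rho> D p0 r pimi piD \<nu> =
     \<rho> * \<alpha> * emp_avg D (\<lambda>x. exp (e_hat \<alpha> \<gamma> r pimi piD \<nu> x / \<alpha> - 1))
     + (1 - \<gamma>) * measure_pmf.expectation p0 \<nu>"

definition Ltilde_obj ::
  "real \<Rightarrow> real \<Rightarrow> real \<Rightarrow> ('s \<times> 'a \<times> 'b \<times> 's) multiset \<Rightarrow> 's pmf
   \<Rightarrow> ('s \<Rightarrow> 'a \<Rightarrow> 'b \<Rightarrow> real) \<Rightarrow> ('s \<Rightarrow> 'b \<Rightarrow> real)
   \<Rightarrow> ('s \<Rightarrow> 'a \<Rightarrow> 'b \<Rightarrow> real) \<Rightarrow> ('s \<Rightarrow> real) \<Rightarrow> real" where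
  "Ltilde_obj \<alpha> \<gamma> \<rho> D p0 r pimi piD \<nu> =
     \<alpha> * ln (\<rho> * emp_avg D (\<lambda>x. exp (e_hat \<alpha> \<gamma> r pimi piD \<nu> x / \<alpha>)))
     + (1 - \<gamma>) * measure_pmf.expectation p0 \<nu>"

end

theory Submission
  imports Defs
begin

text \<open>Write \<open>Z \<nu>\<close> (\<open>exp_adv_avg\<close> below) for the empirical average of \<open>exp (e_hat \<nu> x / \<alpha>)\<close>. Then
  \<open>L \<nu> = \<alpha> (\<rho> Z \<nu>) / e + (1 - \<gamma>) E \<nu>\<close> and \<open>L_tilde \<nu> = \<alpha> ln (\<rho> Z \<nu>) + (1 - \<gamma>) E \<nu>\<close>,
  so \<open>ln y \<le> y / e\<close> gives \<open>L_tilde \<le> L\<close> everywhere, with equality where \<open>\<rho> Z \<nu> = e\<close>.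
  Adding a constant \<open>C\<close> to \<open>\<nu>\<close> multiplies \<open>Z \<nu>\<close> by \<open>exp ((\<gamma> - 1) C / \<alpha>)\<close> and adds \<open>C\<close>
  to \<open>E \<nu>\<close>, which leaves \<open>L_tilde\<close> unchanged; since \<open>\<gamma> < 1\<close>, a suitable \<open>C\<close> moves a minimiser
  of \<open>L_tilde\<close> onto the equality set, where it minimises \<open>L\<close> as well.\<close>

lemma emp_avg_mult_right: "emp_avg D (\<lambda>x. f x * c) = emp_avg D f * c"
  unfolding emp_avg_def by (simp add: sum_mset_distrib_right[symmetric])

lemma sum_mset_pos:
  fixes f :: "'a \<Rightarrow> real"
  assumes "M \<noteq> {#}" and "\<And>x. x \<in># M \<Longrightarrow> 0 < f x"
  shows "0 < (\<Sum>x\<in>#M. f x)"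
proof -
  obtain y M' where M: "M = add_mset y M'"
    using assms(1) multi_nonempty_split by blast
  have "(\<Sum>x\<in>#M'. 0) \<le> (\<Sum>x\<in>#M'. f x)"
    using assms(2) M by (intro sum_mset_mono) (simp add: less_imp_le)
  then show ?thesis
    using assms(2)[of y] M by simp
qed

lemma emp_avg_pos:
  "D \<noteq> {#} \<Longrightarrow> (\<And>x. x \<in># D \<Longrightarrow> 0 < f x) \<Longrightarrow> 0 < emp_avg D f"
  unfolding emp_avg_def by (intro divide_pos_pos sum_mset_pos) (auto simp: nonempty_has_size)

lemma expectation_add_const:
  fixes f :: "'a \<Rightarrow> real"
  assumes "integrable (measure_pmf p) f"
  shows "measure_pmf.expectation p (\<lambda>x. f x + c) = measure_pmf.expectation p f + c"
  using assms by (simp add: measure_pmf.prob_space)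

lemma ln_le_div_exp_1:
  fixes y :: real
  assumes "0 < y"
  shows "ln y \<le> y / exp 1"
  using ln_le_minus_one[of "y / exp 1"] assms by (simp add: ln_div)

lemma e_hat_add_const:
  "e_hat \<alpha> \<gamma> r pimi piD (\<lambda>s. \<nu> s + C) x = e_hat \<alpha> \<gamma> r pimi piD \<nu> x + (\<gamma> - 1) * C"
  unfolding e_hat_def by (cases x) (simp add: algebra_simps)

context
  fixes \<alpha> \<gamma> \<rho> :: real
    and D :: "('s \<times> 'a \<times> 'b \<times> 's) multiset"
    and p0 :: "'s pmf"
    and r :: "'s \<Rightarrow> 'a \<Rightarrow> 'b \<Rightarrow> real"
    and pimi :: "'s \<Rightarrow> 'b \<Rightarrow> real"
    and piD :: "'s \<Rightarrow> 'a \<Rightarrow> 'b \<Rightarrow> real"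
begin

definition exp_adv_avg :: "('s \<Rightarrow> real) \<Rightarrow> real" where
  "exp_adv_avg \<nu> = emp_avg D (\<lambda>x. exp (e_hat \<alpha> \<gamma> r pimi piD \<nu> x / \<alpha>))"

abbreviation L :: "('s \<Rightarrow> real) \<Rightarrow> real" where
  "L \<equiv> L_obj \<alpha> \<gamma> \<rho> D p0 r pimi piD"

abbreviation L_tilde :: "('s \<Rightarrow> real) \<Rightarrow> real" where
  "L_tilde \<equiv> Ltilde_obj \<alpha> \<gamma> \<rho> D p0 r pimi piD"

lemma exp_adv_avg_pos: "D \<noteq> {#} \<Longrightarrow> 0 < exp_adv_avg \<nu>"
  unfolding exp_adv_avg_def by (rule emp_avg_pos) auto

lemma exp_adv_avg_add_const:
  "exp_adv_avg (\<lambda>s. \<nu> s + C) = exp_adv_avg \<nu> * exp ((\<gamma> - 1) * C / \<alpha>)"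
  unfolding exp_adv_avg_def e_hat_add_const
  by (simp add: add_divide_distrib exp_add emp_avg_mult_right)

lemma L_obj_eq:
  "L \<nu> = \<alpha> * (\<rho> * exp_adv_avg \<nu> / exp 1) + (1 - \<gamma>) * measure_pmf.expectation p0 \<nu>"
proof -
  have exp_minus_1: "(\<lambda>x. exp (e_hat \<alpha> \<gamma> r pimi piD \<nu> x / \<alpha> - 1))
      = (\<lambda>x. exp (e_hat \<alpha> \<gamma> r pimi piD \<nu> x / \<alpha>) * inverse (exp 1))"
    by (simp add: exp_diff divide_inverse)
  show ?thesis
    unfolding L_obj_def exp_adv_avg_def exp_minus_1 emp_avg_mult_right
    by (simp add: divide_inverse)
qed

lemma Ltilde_obj_eq:
  "L_tilde \<nu> = \<alpha> * ln (\<rho> * exp_adv_avg \<nu>) + (1 - \<gamma>) * measure_pmf.expectation p0 \<nu>"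
  unfolding Ltilde_obj_def exp_adv_avg_def ..

lemma Ltilde_obj_le_L_obj:
  assumes "0 < \<alpha>" and "0 < \<rho>" and "D \<noteq> {#}"
  shows "L_tilde \<nu> \<le> L \<nu>"
proof -
  have "ln (\<rho> * exp_adv_avg \<nu>) \<le> \<rho> * exp_adv_avg \<nu> / exp 1"
    using assms(2,3) by (intro ln_le_div_exp_1) (simp add: exp_adv_avg_pos)
  then show ?thesis
    unfolding Ltilde_obj_eq L_obj_eq using assms(1) by (intro add_right_mono mult_left_mono) auto
qed

lemma L_obj_eq_Ltilde_obj:
  "\<rho> * exp_adv_avg \<nu> = exp 1 \<Longrightarrow> L \<nu> = L_tilde \<nu>"
  unfolding Ltilde_obj_eq L_obj_eq by simp

lemma Ltilde_obj_add_const: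
  assumes "0 < \<alpha>" and "0 < \<rho>" and "D \<noteq> {#}" and "finite (set_pmf p0)"
  shows "L_tilde (\<lambda>s. \<nu> s + C) = L_tilde \<nu>"
proof -
  have "0 < exp_adv_avg \<nu>"
    using assms(3) by (rule exp_adv_avg_pos)
  then have "ln (\<rho> * exp_adv_avg (\<lambda>s. \<nu> s + C)) = ln (\<rho> * exp_adv_avg \<nu>) + (\<gamma> - 1) * C / \<alpha>"
    using assms(2) by (simp add: exp_adv_avg_add_const ln_mult)
  moreover have "measure_pmf.expectation p0 (\<lambda>s. \<nu> s + C) = measure_pmf.expectation p0 \<nu> + C"
    using assms(4) by (intro expectation_add_const integrable_measure_pmf_finite)
  ultimately show ?thesis
    unfolding Ltilde_obj_eq using assms(1) by (simp add: field_simps)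
qed

lemma exp_adv_avg_normalising_const:
  assumes "0 < \<alpha>" and "\<gamma> < 1" and "0 < \<rho>" and "D \<noteq> {#}"
  obtains C where "\<rho> * exp_adv_avg (\<lambda>s. \<nu> s + C) = exp 1"
proof
  define C where "C = \<alpha> / (1 - \<gamma>) * (ln (\<rho> * exp_adv_avg \<nu>) - 1)"
  have "(\<gamma> - 1) * C / \<alpha> = 1 - ln (\<rho> * exp_adv_avg \<nu>)"
    unfolding C_def using assms(1,2) by (simp add: field_simps)
  moreover have "0 < exp_adv_avg \<nu>"
    using assms(4) by (rule exp_adv_avg_pos)
  ultimately show "\<rho> * exp_adv_avg (\<lambda>s. \<nu> s + C) = exp 1"
    using assms(3) by (simp add: exp_adv_avg_add_const exp_diff)
qed

end

theorem lemma4: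
  fixes \<alpha> \<gamma> \<rho> :: real
    and D :: "('s \<times> 'a \<times> 'b \<times> 's) multiset"
    and p0 :: "'s pmf"
    and r :: "'s \<Rightarrow> 'a \<Rightarrow> 'b \<Rightarrow> real"
    and pimi :: "'s \<Rightarrow> 'b \<Rightarrow> real"
    and piD :: "'s \<Rightarrow> 'a \<Rightarrow> 'b \<Rightarrow> real"
    and \<nu>s :: "'s \<Rightarrow> real"
  assumes "\<alpha> > 0" and "0 < \<gamma>" and "\<gamma> < 1" and "\<rho> > 0"
    and "D \<noteq> {#}"
    and "finite (set_pmf p0)"
    and "\<And>s ai ami s'. (s, ai, ami, s') \<in># D \<Longrightarrow> pimi s ami > 0 \<and> piD s ai ami > 0"
    and "\<And>\<nu>. Ltilde_obj \<alpha> \<gamma> \<rho> D p0 r pimi piD \<nu>s \<le> Ltilde_obj \<alpha> \<gamma> \<rho> D p0 r pimi piD \<nu>"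
  shows "\<exists>C::real. \<forall>\<nu>. L_obj \<alpha> \<gamma> \<rho> D p0 r pimi piD (\<lambda>s. \<nu>s s + C)
                          \<le> L_obj \<alpha> \<gamma> \<rho> D p0 r pimi piD \<nu>"
proof -
  obtain C where normalised: "\<rho> * exp_adv_avg \<alpha> \<gamma> D r pimi piD (\<lambda>s. \<nu>s s + C) = exp 1"
    using exp_adv_avg_normalising_const assms(1,3,4,5) by blast
  have "L_obj \<alpha> \<gamma> \<rho> D p0 r pimi piD (\<lambda>s. \<nu>s s + C) \<le> L_obj \<alpha> \<gamma> \<rho> D p0 r pimi piD \<nu>" for \<nu>
  proof -
    have "L_obj \<alpha> \<gamma> \<rho> D p0 r pimi piD (\<lambda>s. \<nu>s s + C)
        = Ltilde_obj \<alpha> \<gamma> \<rho> D p0 r pimi piD (\<lambda>s. \<nu>s s + C)"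
      using normalised by (rule L_obj_eq_Ltilde_obj)
    also have "\<dots> = Ltilde_obj \<alpha> \<gamma> \<rho> D p0 r pimi piD \<nu>s"
      using assms(1,4,5,6) by (rule Ltilde_obj_add_const)
    also have "\<dots> \<le> Ltilde_obj \<alpha> \<gamma> \<rho> D p0 r pimi piD \<nu>"
      by (rule assms(8))
    also have "\<dots> \<le> L_obj \<alpha> \<gamma> \<rho> D p0 r pimi piD \<nu>"
      using assms(1,4,5) by (rule Ltilde_obj_le_L_obj)
    finally show ?thesis .
  qed
  then show ?thesis by blast
qed

end
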